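(* Let $\ell\ge1$, $r\ge3$ and $n\ge\max\{3r-5,\,2\ell+3\}$. Then $$\min_{C}|H_n^{(r)}(C)|<\min_{C'}|H_n^{(r)}(C')|,$$ where $C$ ranges over semi-valid tuples of length $2\ell+1$ in $\Omega_n$ and $C'$ over semi-valid tuples of length $2\ell+3$ in $\Omega_n$.
   Context: $\Omega_n=\{v_0,\dots,v_{n-1}\}$ with cyclic order $v_0<\dots<v_{n-1}<v_0$, indices mod $n$. For distinct vertices $u,w$, $(u,w)$ is the set of vertices strictly between $u$ and $w$ moving clockwise from $u$ to $w$, and $[u,w]=(u,w)\cup\{u,w\}$. A tuple $C=(w_1,\dots,w_{2m+1})$ of distinct vertices is semi-valid if $w_1<w_3<\dots<w_{2m+1}<w_2<w_4<\dots<w_{2m}<w_1$ in clockwise cyclic order; indices of the $w$'s mod $2m+1$. $H_n^{(r)}(C)=\{e\in\binom{\Omega_n}{r}: e\cap[w_p,w_{p-1}]\neq\emptyset\ \forall p\in\{1,\dots,2m+1\}\}$. *)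

theory Defs
  imports Main
begin

text \<open>Vertices of Omega_n are the naturals 0..n-1, v_i = i, clockwise order = increasing index mod n.\<close>

definition cyc_open :: "nat \<Rightarrow> nat \<Rightarrow> nat \<Rightarrow> nat set" where
  "cyc_open n u w = {(u + k) mod n | k. 0 < k \<and> k < (w + n - u) mod n}"

definition cyc_closed :: "nat \<Rightarrow> nat \<Rightarrow> nat \<Rightarrow> nat set" where
  "cyc_closed n u w = cyc_open n u w \<union> {u, w}"

text \<open>A list of distinct vertices s_0,...,s_{k-1} satisfies s_0 < s_1 < ... < s_{k-1} < s_0
  in the clockwise cyclic order iff some rotation of it is strictly increasing.\<close>
definition cyc_ordered :: "nat \<Rightarrow> nat list \<Rightarrow> bool" where
  "cyc_ordered n s \<longleftrightarrow> set s \<subseteq> {..<n} \<and> (\<exists>k. sorted_wrt (<) (rotate k s))"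

text \<open>Tuple C = (w_1,...,w_{2m+1}) as list with C ! i = w_{i+1}.\<close>
definition odd_even_order :: "nat list \<Rightarrow> nat list" where
  "odd_even_order C = map (\<lambda>j. C ! (2*j)) [0..<(length C + 1) div 2]
                      @ map (\<lambda>j. C ! (2*j+1)) [0..<length C div 2]"

definition semi_valid :: "nat \<Rightarrow> nat list \<Rightarrow> bool" where
  "semi_valid n C \<longleftrightarrow> odd (length C) \<and> distinct C \<and> set C \<subseteq> {..<n}
      \<and> cyc_ordered n (odd_even_order C)"

text \<open>H_n^(r)(C): w_p is C ! i, w_{p-1} is C ! ((i + length C - 1) mod length C).\<close>
definition H :: "nat \<Rightarrow> nat \<Rightarrow> nat list \<Rightarrow> nat set set" where
  "H n r C = {e. e \<subseteq> {..<n} \<and> card e = r \<and>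
      (\<forall>i < length C. e \<inter> cyc_closed n (C ! i) (C ! ((i + length C - 1) mod length C)) \<noteq> {})}"

end

theory Submission
  imports Defs
begin

text \<open>
  An r-set e is a non-edge of H(C) iff it misses one of the intervals [w_p, w_(p-1)], and each
  such interval holds m + 1 of the 2m + 1 points of C. Enlarging the missed interval to the gap
  of e between two cyclically consecutive elements x and x + s + 1, every non-edge has a gap of
  some length s whose arc holds a majority of C, and each gap is completed to an r-set in
  C(n - s - 2, r - 2) ways. So the number of non-edges is at most the sum over s of
  C(n - s - 2, r - 2) N(s), where N(s) counts the arcs of length s holding a majority of C.
  For the tuple whose points are 2m + 1 consecutive vertices this is essentially exact: two gaps
  of one set are disjoint arcs, so at most one of them holds a majority.

  For 2l + 3 points, N(s) + N(n - s) = n and, by Katona's circle argument, N(s) <= s for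
  2s <= n; for the consecutive (2l + 1)-tuple the corresponding count is 0 for s <= l and s for
  l < s < n - l, and it satisfies the same symmetry. The weights decrease in s, so pairing s
  with n - s shows that the consecutive (2l + 1)-tuple has strictly more non-edges than any
  (2l + 3)-tuple, i.e. strictly fewer edges.
\<close>

section \<open>Arcs of the cycle\<close>

definition arc :: "nat \<Rightarrow> nat \<Rightarrow> nat \<Rightarrow> nat set" where
  "arc n x s = (\<lambda>k. (x + k) mod n) ` {1..s}"

lemma mod_add_neq:
  fixes x k k' n :: nat
  assumes "k < k'" and "k' - k < n"
  shows "(x + k) mod n \<noteq> (x + k') mod n"
proof
  assume "(x + k) mod n = (x + k') mod n"
  then have "n dvd (x + k') - (x + k)"
    using assms(1) by (metis add_le_cancel_left less_or_eq_imp_le mod_eq_dvd_iff_nat)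
  then show False
    using assms by (simp add: nat_dvd_not_less)
qed

lemma mod_add_right_cancel: "(a + k) mod n = (b + k) mod n \<Longrightarrow> a mod n = b mod (n::nat)"
  by (simp add: nat_mod_eq_iff)

lemma arc_subset_lessThan: "0 < n \<Longrightarrow> arc n x s \<subseteq> {..<n}"
  unfolding arc_def by auto

lemma finite_arc [simp]: "finite (arc n x s)"
  unfolding arc_def by simp

lemma arc_mod [simp]: "arc n (x mod n) s = arc n x s"
  unfolding arc_def by (simp add: mod_add_left_eq)

lemma arc_add_self: "arc n (x + n) s = arc n x s"
  using arc_mod[of n "x + n" s] arc_mod[of n x s] by simp

lemma arc_memI: "1 \<le> k \<Longrightarrow> k \<le> s \<Longrightarrow> (x + k) mod n \<in> arc n x s"
  unfolding arc_def by auto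

lemma arc_memE:
  assumes "y \<in> arc n x s"
  obtains k where "1 \<le> k" "k \<le> s" "y = (x + k) mod n"
  using assms unfolding arc_def by auto

lemma card_arc:
  assumes "s \<le> n"
  shows "card (arc n x s) = s"
proof -
  have "inj_on (\<lambda>k. (x + k) mod n) {1..s}"
  proof (rule linorder_inj_onI)
    fix k k' assume "k < k'" "k \<in> {1..s}" "k' \<in> {1..s}"
    then show "(x + k) mod n \<noteq> (x + k') mod n"
      using assms by (intro mod_add_neq) auto
  qed auto
  then show ?thesis
    unfolding arc_def by (simp add: card_image)
qed

lemma arc_whole: "0 < n \<Longrightarrow> arc n x n = {..<n}"
  by (simp add: arc_subset_lessThan card_arc card_subset_eq)

lemma arc_split:
  assumes "s \<le> t"
  shows "arc n x t = arc n x s \<union> arc n (x + s) (t - s)"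
proof -
  have "{1..t} = {1..s} \<union> (\<lambda>k. s + k) ` {1..t - s}"
    using assms by (auto simp: image_iff intro: exI[where x = "_ - s"])
  then have "arc n x t = (\<lambda>k. (x + k) mod n) ` ({1..s} \<union> (\<lambda>k. s + k) ` {1..t - s})"
    by (simp only: arc_def)
  also have "\<dots> = arc n x s \<union> arc n (x + s) (t - s)"
    unfolding arc_def image_Un image_image by (simp add: add.assoc)
  finally show ?thesis .
qed

lemma arcs_consecutive_disjoint:
  assumes "s + t \<le> n"
  shows "arc n x s \<inter> arc n (x + s) t = {}"
proof -
  have "card (arc n x s \<union> arc n (x + s) t) = s + t"
    using arc_split[of s "s + t" n x] card_arc[OF assms, of x] by simp
  also have "\<dots> = card (arc n x s) + card (arc n (x + s) t)"
    using assms card_arc by simp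
  finally show ?thesis
    using card_Un_Int[of "arc n x s" "arc n (x + s) t"] by simp
qed

lemma arc_subset_arc: "a + t \<le> s \<Longrightarrow> arc n (x + a) t \<subseteq> arc n x s"
  using arc_split[of a s n x] arc_split[of t "s - a" n "x + a"] by auto

lemma card_Int_arc_complement:
  assumes "0 < n" "s \<le> n" "P \<subseteq> {..<n}"
  shows "card (P \<inter> arc n x s) + card (P \<inter> arc n (x + s) (n - s)) = card P"
proof -
  have "P = (P \<inter> arc n x s) \<union> (P \<inter> arc n (x + s) (n - s))"
    using arc_split[of s n n x] arc_whole assms by auto
  moreover have "(P \<inter> arc n x s) \<inter> (P \<inter> arc n (x + s) (n - s)) = {}"
    using arcs_consecutive_disjoint[of s "n - s" n x] assms by auto
  ultimately show ?thesis
    by (metis card_Un_disjoint finite_Int finite_arc)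
qed

lemma arcs_meet_cases:
  assumes "x < n" "x' < n" "arc n x s \<inter> arc n x' s' \<noteq> {}"
  obtains "x' = x"
    | d where "1 \<le> d" "d < s" "x' = (x + d) mod n"
    | d where "1 \<le> d" "d < s'" "x = (x' + d) mod n"
proof -
  obtain y where "y \<in> arc n x s" "y \<in> arc n x' s'"
    using assms(3) by blast
  then obtain k k' where k: "1 \<le> k" "k \<le> s" "y = (x + k) mod n"
    and k': "1 \<le> k'" "k' \<le> s'" "y = (x' + k') mod n"
    by (auto elim!: arc_memE)
  consider "k = k'" | "k' < k" | "k < k'"
    by linarith
  then show thesis
  proof cases
    case 1
    then show thesis
      using k k' assms mod_add_right_cancel[of x k n x'] that(1) by simp
  next
    case 2
    have "(x + (k - k') + k') mod n = (x' + k') mod n"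
      using 2 k k' by simp
    then have "x' = (x + (k - k')) mod n"
      using assms(2) mod_add_right_cancel by (metis mod_less)
    then show thesis
      using 2 k k' by (intro that(2)[of "k - k'"]) auto
  next
    case 3
    have "(x' + (k' - k) + k) mod n = (x + k) mod n"
      using 3 k k' by simp
    then have "x = (x' + (k' - k)) mod n"
      using assms(1) mod_add_right_cancel by (metis mod_less)
    then show thesis
      using 3 k k' by (intro that(3)[of "k' - k"]) auto
  qed
qed

lemma cyc_closed_eq_arc:
  assumes "u < n" "w < n"
  shows "cyc_closed n u w = arc n (u + n - 1) ((w + n - u) mod n + 1)"
proof -
  let ?L = "(w + n - u) mod n"
  have "arc n (u + n - 1) (?L + 1) = (\<lambda>k. (u + n - 1 + k) mod n) ` Suc ` {0..?L}"
    unfolding arc_def by (simp add: image_Suc_atLeastAtMost)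
  also have "\<dots> = (\<lambda>j. (u + j) mod n) ` {0..?L}"
    unfolding image_image
  proof (rule image_cong[OF refl])
    fix j
    have "u + n - 1 + Suc j = (u + j) + n"
      using assms by simp
    then show "(u + n - 1 + Suc j) mod n = (u + j) mod n"
      by (metis mod_add_self2)
  qed
  finally have arc_eq: "arc n (u + n - 1) (?L + 1) = (\<lambda>j. (u + j) mod n) ` {0..?L}" .
  have "(u + ?L) mod n = w"
    using assms by (simp add: mod_add_right_eq)
  moreover have "{0..?L} = insert 0 (insert ?L {k. 0 < k \<and> k < ?L})"
    by auto
  ultimately show ?thesis
    using assms unfolding arc_eq cyc_closed_def cyc_open_def by auto
qed

section \<open>Arcs rich in points of a set\<close>

definition rich_starts :: "nat \<Rightarrow> nat set \<Rightarrow> nat \<Rightarrow> nat \<Rightarrow> nat set" where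
  "rich_starts n P q s = {x. x < n \<and> q \<le> card (P \<inter> arc n x s)}"

lemma finite_rich_starts [simp]: "finite (rich_starts n P q s)"
  unfolding rich_starts_def by simp

lemma rich_starts_subset: "rich_starts n P q s \<subseteq> {..<n}"
  unfolding rich_starts_def by auto

lemma rich_starts_empty_if_short:
  assumes "s < q" "s \<le> n"
  shows "rich_starts n P q s = {}"
proof -
  have "card (P \<inter> arc n x s) \<le> s" for x
    using card_mono[of "arc n x s" "P \<inter> arc n x s"] card_arc[OF assms(2)] by simp
  then show ?thesis
    unfolding rich_starts_def using assms(1) by (auto simp: not_le intro: le_less_trans)
qed

text \<open>As |P| = 2q - 1, exactly one of the two arcs into which x and x + s cut the cycle is rich.\<close>
lemma card_rich_starts_complement:
  assumes "0 < n" "s \<le> n" "P \<subseteq> {..<n}" "card P + 1 = 2 * q"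
  shows "card (rich_starts n P q s) + card (rich_starts n P q (n - s)) = n"
proof -
  let ?shift = "\<lambda>x. (x + s) mod n"
  let ?T = "{x. x < n \<and> q \<le> card (P \<inter> arc n (x + s) (n - s))}"
  have "q \<le> card (P \<inter> arc n (x + s) (n - s)) \<longleftrightarrow> \<not> q \<le> card (P \<inter> arc n x s)" for x
    using card_Int_arc_complement[OF assms(1-3), of x] assms(4) by linarith
  then have "?T = {..<n} - rich_starts n P q s"
    unfolding rich_starts_def by auto
  then have card_T: "card ?T = n - card (rich_starts n P q s)"
    using rich_starts_subset by (simp add: card_Diff_subset)
  have inj: "inj_on ?shift {..<n}"
    by (rule inj_onI) (auto dest: mod_add_right_cancel)
  then have surj: "?shift ` {..<n} = {..<n}"
    using assms(1) by (intro card_subset_eq) (auto simp: card_image)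
  have "rich_starts n P q (n - s) = ?shift ` ?T"
  proof (intro equalityI subsetI)
    fix y assume y: "y \<in> rich_starts n P q (n - s)"
    then obtain x where "x < n" "y = ?shift x"
      using surj rich_starts_subset by blast
    then show "y \<in> ?shift ` ?T"
      using y unfolding rich_starts_def by auto
  qed (use assms(1) in \<open>auto simp: rich_starts_def\<close>)
  then have "card (rich_starts n P q (n - s)) = card ?T"
    using card_image[OF inj_on_subset[OF inj, of ?T]] by auto
  then show ?thesis
    using card_T card_mono[OF _ rich_starts_subset, of n P q s] by simp
qed

lemma rich_arcs_meet:
  assumes "x \<in> rich_starts n P q s" "x' \<in> rich_starts n P q s'" "finite P" "card P < 2 * q"
  shows "arc n x s \<inter> arc n x' s' \<noteq> {}"
proof
  assume "arc n x s \<inter> arc n x' s' = {}"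
  then have "card (P \<inter> arc n x s) + card (P \<inter> arc n x' s') = card (P \<inter> arc n x s \<union> P \<inter> arc n x' s')"
    by (intro card_Un_disjoint[symmetric]) auto
  also have "\<dots> \<le> card P"
    using assms(3) by (intro card_mono) auto
  finally have "card (P \<inter> arc n x s) + card (P \<inter> arc n x' s') \<le> card P" .
  moreover have "q \<le> card (P \<inter> arc n x s)" "q \<le> card (P \<inter> arc n x' s')"
    using assms(1,2) unfolding rich_starts_def by auto
  ultimately show False
    using assms(4) by linarith
qed

text \<open>Katona's circle argument: rich arcs pairwise meet, so a rich arc starts at x0 (a fixed
  rich start) or in one of the s - 1 pairs {x0 + d, x0 + d - s}; the two arcs starting in a pair
  are consecutive, hence disjoint, so at most one of them is rich.\<close>
lemma card_rich_starts_le: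
  assumes "1 \<le> s" "2 * s \<le> n" "finite P" "card P < 2 * q"
  shows "card (rich_starts n P q s) \<le> s"
proof (cases "rich_starts n P q s = {}")
  case False
  let ?R = "rich_starts n P q s"
  obtain x0 where x0: "x0 \<in> ?R"
    using False by blast
  then have "x0 < n"
    unfolding rich_starts_def by simp
  define pair where "pair d = {(x0 + d) mod n, (x0 + d + n - s) mod n}" for d
  have cover: "?R \<subseteq> insert x0 (\<Union>d\<in>{1..s-1}. ?R \<inter> pair d)"
  proof
    fix x assume x: "x \<in> ?R"
    then have "x < n"
      unfolding rich_starts_def by simp
    from \<open>x0 < n\<close> this rich_arcs_meet[OF x0 x assms(3,4)]
    show "x \<in> insert x0 (\<Union>d\<in>{1..s-1}. ?R \<inter> pair d)"
    proof (cases rule: arcs_meet_cases)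
      case (2 d)
      then show ?thesis
        using x unfolding pair_def by auto
    next
      case (3 d)
      have "x0 + (s - d) + n - s = x0 + (n - d)"
        using 3 assms(2) by simp
      then have "(x0 + (s - d) + n - s) mod n = (x + d + (n - d)) mod n"
        using 3 by (simp add: mod_add_left_eq)
      also have "\<dots> = x"
        using 3 \<open>x < n\<close> assms(2) by simp
      finally show ?thesis
        using x 3 unfolding pair_def by (auto intro!: bexI[where x = "s - d"])
    qed simp
  qed
  have pair_card: "card (?R \<inter> pair d) \<le> 1" for d
  proof -
    let ?y = "x0 + d + n - s"
    have "arc n ?y s \<inter> arc n (?y + s) s = {}"
      using assms(2) by (intro arcs_consecutive_disjoint) simp
    moreover have "?y + s = (x0 + d) + n"
      using assms(2) by simp
    ultimately have "arc n (?y mod n) s \<inter> arc n ((x0 + d) mod n) s = {}"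
      by (simp add: arc_add_self)
    then have "\<not> ((x0 + d) mod n \<in> ?R \<and> ?y mod n \<in> ?R)"
      using rich_arcs_meet assms(3,4) by blast
    then have "?R \<inter> pair d \<subseteq> {(x0 + d) mod n} \<or> ?R \<inter> pair d \<subseteq> {?y mod n}"
      unfolding pair_def by blast
    then show ?thesis
      using card_mono[of "{(x0 + d) mod n}"] card_mono[of "{?y mod n}"] by fastforce
  qed
  have "card ?R \<le> card (insert x0 (\<Union>d\<in>{1..s-1}. ?R \<inter> pair d))"
    by (rule card_mono[OF _ cover]) (simp add: pair_def)
  also have "\<dots> \<le> 1 + card (\<Union>d\<in>{1..s-1}. ?R \<inter> pair d)"
    by (simp add: card_insert_if)
  also have "\<dots> \<le> 1 + (\<Sum>d\<in>{1..s-1}. card (?R \<inter> pair d))"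
    using card_UN_le[of "{1..s-1}" "\<lambda>d. ?R \<inter> pair d"] by simp
  also have "\<dots> \<le> 1 + (s - 1)"
    using sum_mono[of "{1..s-1}" "\<lambda>d. card (?R \<inter> pair d)" "\<lambda>_. 1"] pair_card by simp
  finally show ?thesis
    using assms(1) by simp
qed simp

section \<open>Sets with a prescribed gap\<close>

lemma card_subsets_containing_avoiding:
  assumes "finite U" "B \<subseteq> U" "B \<inter> D = {}" "card B \<le> r"
  shows "card {e. e \<subseteq> U \<and> card e = r \<and> B \<subseteq> e \<and> e \<inter> D = {}}
    = card (U - B - D) choose (r - card B)"
proof -
  let ?A = "{A. A \<subseteq> U - B - D \<and> card A = r - card B}"
  have finB: "finite B"
    using assms(1,2) finite_subset by blast
  have "{e. e \<subseteq> U \<and> card e = r \<and> B \<subseteq> e \<and> e \<inter> D = {}} = (\<lambda>A. A \<union> B) ` ?A"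
  proof (intro equalityI subsetI)
    fix e assume e: "e \<in> {e. e \<subseteq> U \<and> card e = r \<and> B \<subseteq> e \<and> e \<inter> D = {}}"
    then have "e - B \<in> ?A" "e = (e - B) \<union> B"
      using finB by (auto simp: card_Diff_subset)
    then show "e \<in> (\<lambda>A. A \<union> B) ` ?A"
      by blast
  next
    fix e assume "e \<in> (\<lambda>A. A \<union> B) ` ?A"
    then obtain A where "A \<subseteq> U - B - D" "card A = r - card B" "e = A \<union> B"
      by blast
    moreover have "finite A" "A \<inter> B = {}"
      using calculation(1) assms(1) by (auto intro: finite_subset)
    ultimately show "e \<in> {e. e \<subseteq> U \<and> card e = r \<and> B \<subseteq> e \<and> e \<inter> D = {}}"
      using assms finB by (auto simp: card_Un_disjoint)
  qed
  moreover have "inj_on (\<lambda>A. A \<union> B) ?A"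
    by (rule inj_onI) blast
  ultimately show ?thesis
    using n_subsets[of "U - B - D" "r - card B"] assms(1) by (simp add: card_image)
qed

definition r_subsets :: "nat \<Rightarrow> nat \<Rightarrow> nat set set" where
  "r_subsets n r = {e. e \<subseteq> {..<n} \<and> card e = r}"

lemma finite_r_subsets [simp]: "finite (r_subsets n r)"
  unfolding r_subsets_def by (rule finite_subset[of _ "Pow {..<n}"]) auto

lemma card_r_subsets: "card (r_subsets n r) = n choose r"
  unfolding r_subsets_def using n_subsets[of "{..<n}" r] by simp

lemma H_subset_r_subsets: "H n r C \<subseteq> r_subsets n r"
  unfolding H_def r_subsets_def by auto

definition sets_with_gap :: "nat \<Rightarrow> nat \<Rightarrow> nat \<Rightarrow> nat \<Rightarrow> nat set set" where
  "sets_with_gap n r x s =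
    {e \<in> r_subsets n r. x \<in> e \<and> (x + s + 1) mod n \<in> e \<and> e \<inter> arc n x s = {}}"

lemma mod_add_notin_arc:
  assumes "s < n" "j < n" "j \<notin> {1..s}"
  shows "(x + j) mod n \<notin> arc n x s"
proof
  assume "(x + j) mod n \<in> arc n x s"
  then obtain k where k: "1 \<le> k" "k \<le> s" "(x + j) mod n = (x + k) mod n"
    by (auto elim: arc_memE)
  have "j \<noteq> k" "k < n"
    using k assms by auto
  then consider "j < k" "k - j < n" | "k < j" "j - k < n"
    using assms(2) by fastforce
  then show False
    using mod_add_neq[of j k n x] mod_add_neq[of k j n x] k(3) by cases auto
qed

lemma card_sets_with_gap:
  assumes "x < n" "s + 1 \<le> n" "3 \<le> r"
  shows "card (sets_with_gap n r x s) = (n - s - 2) choose (r - 2)"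
proof (cases "s + 1 = n")
  case True
  have "x + s + 1 = x + n"
    using True by simp
  then have "(x + s + 1) mod n = x"
    using assms(1) by (simp only:) simp
  then have "arc n (x + s) 1 = {x}"
    by (simp add: arc_def)
  then have "{..<n} - arc n x s \<subseteq> {x}"
    using arc_split[of s n n x] arc_whole[of n x] True by auto
  have "sets_with_gap n r x s = {}"
  proof (rule equals0I)
    fix e assume e: "e \<in> sets_with_gap n r x s"
    then have "e \<subseteq> {x}" "card e = r"
      using \<open>{..<n} - arc n x s \<subseteq> {x}\<close> unfolding sets_with_gap_def r_subsets_def by auto
    then show False
      using card_mono[of "{x}" e] assms(3) by simp
  qed
  then show ?thesis
    using True assms(3) by simp
next
  case False
  let ?y = "(x + s + 1) mod n"
  have notin: "x \<notin> arc n x s" "?y \<notin> arc n x s" "x \<noteq> ?y"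
    using mod_add_notin_arc[of s n 0 x] mod_add_notin_arc[of s n "s + 1" x]
      mod_add_neq[of 0 "s + 1" n x] assms(1,2) False by (simp_all add: add.assoc)
  have "sets_with_gap n r x s
      = {e. e \<subseteq> {..<n} \<and> card e = r \<and> {x, ?y} \<subseteq> e \<and> e \<inter> arc n x s = {}}"
    unfolding sets_with_gap_def r_subsets_def by auto
  moreover have "{x, ?y} \<subseteq> {..<n}" "card {x, ?y} = 2"
    using assms(1) notin(3) by auto
  ultimately have "card (sets_with_gap n r x s) = card ({..<n} - {x, ?y} - arc n x s) choose (r - 2)"
    using card_subsets_containing_avoiding[of "{..<n}" "{x, ?y}" "arc n x s" r] assms(3) notin
    by simp
  also have "card ({..<n} - {x, ?y} - arc n x s) = n - s - 2"
  proof -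
    have "{x, ?y} \<union> arc n x s \<subseteq> {..<n}"
      using assms(1) arc_subset_lessThan[of n x s] by auto
    then have "card ({..<n} - ({x, ?y} \<union> arc n x s)) = n - card ({x, ?y} \<union> arc n x s)"
      by (simp add: card_Diff_subset)
    moreover have "card ({x, ?y} \<union> arc n x s) = s + 2"
      using notin card_arc[of s n x] assms(2) by (simp add: card_insert_if)
    moreover have "{..<n} - {x, ?y} - arc n x s = {..<n} - ({x, ?y} \<union> arc n x s)"
      by blast
    ultimately show ?thesis
      by simp
  qed
  finally show ?thesis .
qed

lemma gap_after:
  assumes "x \<in> e" "e \<subseteq> {..<n}" "e \<inter> arc n x t = {}"
  obtains s where "t \<le> s" "s < n" "(x + s + 1) mod n \<in> e" "e \<inter> arc n x s = {}"
proof -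
  define k where "k = (LEAST k. 1 \<le> k \<and> (x + k) mod n \<in> e)"
  have "x < n"
    using assms(1,2) by auto
  then have "1 \<le> n \<and> (x + n) mod n \<in> e"
    using assms(1) by simp
  then have k: "1 \<le> k" "(x + k) mod n \<in> e" "k \<le> n"
    unfolding k_def by (auto intro: LeastI2_wellorder Least_le)
  have before_k: "(x + j) mod n \<notin> e" if "1 \<le> j" "j < k" for j
    using not_less_Least[of j "\<lambda>k. 1 \<le> k \<and> (x + k) mod n \<in> e"] that unfolding k_def by auto
  show thesis
  proof (rule that[of "k - 1"])
    show "t \<le> k - 1"
      using k(1,2) assms(3) arc_memI[of k t x n] by (cases "k \<le> t") auto
    show "e \<inter> arc n x (k - 1) = {}"
      using before_k by (auto elim!: arc_memE)
  qed (use k in auto)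
qed

lemma mod_add_diff_cancel:
  fixes a d n :: nat
  assumes "a \<le> n"
  shows "((a + d) mod n + (n - a)) mod n = d mod n"
proof -
  have "((a + d) mod n + (n - a)) mod n = (a + d + (n - a)) mod n"
    by (simp add: mod_add_left_eq)
  also have "a + d + (n - a) = d + n"
    using assms by simp
  finally show ?thesis
    by simp
qed

lemma nearest_point_before:
  assumes "z < n" "e \<subseteq> {..<n}" "e \<noteq> {}"
  obtains x d where "x \<in> e" "(x + d) mod n = z" "e \<inter> arc n x d = {}"
proof -
  define dist where "dist v = (z + (n - v)) mod n" for v
  have "finite e"
    using assms(2) finite_subset by blast
  then have "Min (dist ` e) \<in> dist ` e"
    using assms(3) by (intro Min_in) auto
  then obtain x where "x \<in> e" "dist x = Min (dist ` e)"
    by auto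
  then have x: "x \<in> e" "\<And>v. v \<in> e \<Longrightarrow> dist x \<le> dist v"
    using \<open>finite e\<close> by auto
  have "x < n" "dist x < n"
    using x(1) assms(1,2) unfolding dist_def by auto
  have z: "(x + dist x) mod n = z"
    using \<open>x < n\<close> assms(1) unfolding dist_def by (simp add: mod_add_right_eq)
  have "e \<inter> arc n x (dist x) = {}"
  proof (rule equals0I)
    fix v assume "v \<in> e \<inter> arc n x (dist x)"
    then obtain k where v: "v \<in> e" "1 \<le> k" "k \<le> dist x" "v = (x + k) mod n"
      by (auto elim: arc_memE)
    have "x + dist x = (x + k) + (dist x - k)"
      using v by simp
    then have "z = ((x + k) mod n + (dist x - k)) mod n"
      using z by (metis mod_add_left_eq)
    then have "z = (v + (dist x - k)) mod n"
      using v by simp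
    have "dist v = (z + (n - v)) mod n"
      by (rule dist_def)
    also have "\<dots> = ((v + (dist x - k)) mod n + (n - v)) mod n"
      using \<open>z = (v + (dist x - k)) mod n\<close> by (simp only:)
    also have "\<dots> = dist x - k"
      using v(4) \<open>dist x < n\<close> assms(1) by (subst mod_add_diff_cancel) auto
    finally have "dist v = dist x - k" .
    then show False
      using x(2)[OF v(1)] v(2,3) by simp
  qed
  then show thesis
    using that x(1) z by blast
qed

lemma gap_covering_arc:
  assumes "z < n" "e \<subseteq> {..<n}" "e \<noteq> {}" "e \<inter> arc n z L = {}" "1 \<le> L"
  obtains x s where "x \<in> e" "1 \<le> s" "s < n" "(x + s + 1) mod n \<in> e" "e \<inter> arc n x s = {}"
    "arc n z L \<subseteq> arc n x s"
proof -
  obtain x d where x: "x \<in> e" "(x + d) mod n = z" "e \<inter> arc n x d = {}"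
    using nearest_point_before[OF assms(1-3)] .
  have "arc n z L = arc n (x + d) L"
    using x(2) arc_mod[of n "x + d" L] by simp
  then have "e \<inter> arc n x (d + L) = {}"
    using x(3) assms(4) arc_split[of d "d + L" n x] by auto
  then obtain s where s: "d + L \<le> s" "s < n" "(x + s + 1) mod n \<in> e" "e \<inter> arc n x s = {}"
    using gap_after[OF x(1) assms(2)] by blast
  show thesis
  proof (rule that[OF x(1) _ s(2-4)])
    show "1 \<le> s"
      using s(1) assms(5) by simp
    show "arc n z L \<subseteq> arc n x s"
      using \<open>arc n z L = arc n (x + d) L\<close> arc_subset_arc s(1) by simp
  qed
qed

lemma sets_with_gap_arcs_disjoint:
  assumes "e \<in> sets_with_gap n r x s" "e \<in> sets_with_gap n r x' s'" "(x, s) \<noteq> (x', s')"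
  shows "arc n x s \<inter> arc n x' s' = {}"
proof (rule ccontr)
  have gap: "x \<in> e" "x' \<in> e" "(x + s + 1) mod n \<in> e" "(x' + s' + 1) mod n \<in> e"
    "e \<inter> arc n x s = {}" "e \<inter> arc n x' s' = {}" "e \<subseteq> {..<n}"
    using assms(1,2) unfolding sets_with_gap_def r_subsets_def by auto
  assume meet: "arc n x s \<inter> arc n x' s' \<noteq> {}"
  have "x < n" "x' < n"
    using gap by auto
  from this meet show False
  proof (cases rule: arcs_meet_cases)
    case 1
    then have "(x + (min s s' + 1)) mod n \<in> arc n x (max s s')"
      using assms(3) by (intro arc_memI) auto
    then show False
      using gap 1 by (cases "s \<le> s'") (auto simp: add.assoc)
  next
    case (2 d)
    then show False
      using gap arc_memI[of d s x n] by auto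
  next
    case (3 d)
    then show False
      using gap arc_memI[of d s' x' n] by auto
  qed
qed

lemma sum_card_sets_with_gap:
  assumes "3 \<le> r" "\<And>s. X s \<subseteq> {..<n}"
  shows "(\<Sum>p\<in>Sigma {1..n-1} X. card (sets_with_gap n r (snd p) (fst p)))
    = (\<Sum>s=1..n-1. ((n - s - 2) choose (r - 2)) * card (X s))"
proof -
  have "finite (X s)" for s
    using assms(2) finite_subset by blast
  then have "(\<Sum>p\<in>Sigma {1..n-1} X. card (sets_with_gap n r (snd p) (fst p)))
      = (\<Sum>s=1..n-1. \<Sum>x\<in>X s. card (sets_with_gap n r x s))"
    by (subst sum.Sigma) (auto simp: split_beta)
  also have "\<dots> = (\<Sum>s=1..n-1. \<Sum>x\<in>X s. (n - s - 2) choose (r - 2))"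
  proof (intro sum.cong refl)
    fix s x assume "s \<in> {1..n-1}" "x \<in> X s"
    then show "card (sets_with_gap n r x s) = (n - s - 2) choose (r - 2)"
      using assms(1) assms(2)[of s] by (intro card_sets_with_gap) auto
  qed
  finally show ?thesis
    by (simp add: mult.commute)
qed

section \<open>Windows of semi-valid tuples\<close>

lemma cyc_closed_memI:
  assumes "u < n" "v < n" "w < n" "(v + n - u) mod n \<le> (w + n - u) mod n"
  shows "v \<in> cyc_closed n u w"
proof -
  let ?j = "(v + n - u) mod n"
  have "(u + n - 1 + (?j + 1)) mod n \<in> arc n (u + n - 1) ((w + n - u) mod n + 1)"
    using assms(4) by (intro arc_memI) auto
  moreover have "(u + n - 1 + (?j + 1)) mod n = (u + ?j + n) mod n"
    using assms(1) by (intro arg_cong[where f = "\<lambda>a. a mod n"]) simp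
  moreover have "(u + ?j + n) mod n = v"
    using assms(1,2) by (simp add: mod_add_right_eq)
  ultimately show ?thesis
    using cyc_closed_eq_arc[OF assms(1,3)] by simp
qed

lemma sorted_cyclic_window:
  assumes sorted: "sorted_wrt (<) S" and len: "length S = K" and S: "set S \<subseteq> {..<n}"
    and "b < K" "t \<le> M" "M < K"
  shows "S ! ((b + t) mod K) \<in> cyc_closed n (S ! b) (S ! ((b + M) mod K))"
proof -
  have mono: "S ! i \<le> S ! j" if "i \<le> j" "j < K" for i j
    using sorted_nth_mono[OF strict_sorted_imp_sorted[OF sorted]] that len by simp
  have strict: "S ! i < S ! j" if "i < j" "j < K" for i j
    using sorted_wrt_nth_less[OF sorted] that len by simp
  have below_n: "S ! i < n" if "i < K" for i
  proof -
    have "S ! i \<in> set S"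
      using that len by simp
    then show ?thesis
      using S by auto
  qed
  let ?u = "S ! b" and ?v = "S ! ((b + t) mod K)" and ?w = "S ! ((b + M) mod K)"
  have lt: "?u < n" "?v < n" "?w < n"
    using below_n \<open>b < K\<close> \<open>M < K\<close> by auto
  have dist: "(y + n - ?u) mod n = (if ?u \<le> y then y - ?u else y + n - ?u)" if "y < n" for y
    using that lt(1) by (auto simp: le_mod_geq)
  consider "b + M < K" | "b + t < K" "K \<le> b + M" | "K \<le> b + t"
    using \<open>t \<le> M\<close> by linarith
  then have "(?v + n - ?u) mod n \<le> (?w + n - ?u) mod n"
  proof cases
    case 1
    then have "?u \<le> ?v" "?v \<le> ?w"
      using mono \<open>t \<le> M\<close> by auto
    then show ?thesis
      using dist lt by simp
  next
    case 2
    then have "?u \<le> ?v" "?w < ?u"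
      using mono strict \<open>b < K\<close> \<open>M < K\<close> by (auto simp: le_mod_geq)
    then show ?thesis
      using dist lt by simp
  next
    case 3
    then have "?v \<le> ?w" "?w < ?u"
      using mono strict \<open>b < K\<close> \<open>t \<le> M\<close> \<open>M < K\<close> by (auto simp: le_mod_geq)
    then show ?thesis
      using dist lt by simp
  qed
  then show ?thesis
    using cyc_closed_memI lt by blast
qed

text \<open>Index of C ! c in odd_even_order C when length C = 2m + 1: as m + 1 is the inverse of 2
  modulo 2m + 1, it sends 2a to a and 2a + 1 to m + 1 + a.\<close>
definition odd_even_pos :: "nat \<Rightarrow> nat \<Rightarrow> nat" where
  "odd_even_pos m c = (c * (m + 1)) mod (2 * m + 1)"

lemma odd_even_pos_less: "odd_even_pos m c < 2 * m + 1"
  unfolding odd_even_pos_def by simp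

lemma odd_even_pos_even:
  assumes "a \<le> m"
  shows "odd_even_pos m (2 * a) = a"
proof -
  have "2 * a * (m + 1) = a + a * (2 * m + 1)"
    by (simp add: algebra_simps)
  then have "odd_even_pos m (2 * a) = (a + a * (2 * m + 1)) mod (2 * m + 1)"
    unfolding odd_even_pos_def by (simp only:)
  then show ?thesis
    using assms by (simp only: mod_mult_self1) simp
qed

lemma odd_even_pos_odd:
  assumes "a < m"
  shows "odd_even_pos m (2 * a + 1) = m + 1 + a"
proof -
  have "(2 * a + 1) * (m + 1) = (m + 1 + a) + a * (2 * m + 1)"
    by (simp add: algebra_simps)
  then have "odd_even_pos m (2 * a + 1) = (m + 1 + a + a * (2 * m + 1)) mod (2 * m + 1)"
    unfolding odd_even_pos_def by (simp only:)
  then show ?thesis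
    using assms by (simp only: mod_mult_self1) simp
qed

lemma odd_even_pos_add_double:
  "odd_even_pos m ((c + 2 * t) mod (2 * m + 1)) = (odd_even_pos m c + t) mod (2 * m + 1)"
proof -
  have "(c + 2 * t) * (m + 1) = c * (m + 1) + t + t * (2 * m + 1)"
    by (simp add: algebra_simps)
  then have "odd_even_pos m ((c + 2 * t) mod (2 * m + 1))
      = (c * (m + 1) + t + t * (2 * m + 1)) mod (2 * m + 1)"
    unfolding odd_even_pos_def mod_mult_left_eq by (simp only:)
  also have "\<dots> = (c * (m + 1) + t) mod (2 * m + 1)"
    by (rule mod_mult_self1)
  finally show ?thesis
    unfolding odd_even_pos_def by (simp only: mod_add_left_eq)
qed

lemma length_odd_even_order: "length C = 2 * m + 1 \<Longrightarrow> length (odd_even_order C) = 2 * m + 1"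
  unfolding odd_even_order_def by simp

lemma nth_odd_even_order:
  assumes "length C = 2 * m + 1" "c < 2 * m + 1"
  shows "odd_even_order C ! odd_even_pos m c = C ! c"
proof (cases "even c")
  case True
  then obtain a where "c = 2 * a" "a \<le> m"
    using assms(2) by (auto elim!: evenE)
  then show ?thesis
    using assms(1) odd_even_pos_even
    unfolding odd_even_order_def by (simp add: nth_append del: upt_Suc)
next
  case False
  then obtain a where "c = 2 * a + 1" "a < m"
    using assms(2) by (auto elim!: oddE)
  then show ?thesis
    using assms(1) odd_even_pos_odd
    unfolding odd_even_order_def by (simp add: nth_append del: upt_Suc)
qed

text \<open>The interval [w_p, w_(p-1)] of the definition of H, for p = i + 1.\<close>
definition window :: "nat \<Rightarrow> nat list \<Rightarrow> nat \<Rightarrow> nat set" where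
  "window n C i = cyc_closed n (C ! i) (C ! ((i + length C - 1) mod length C))"

lemma H_iff_meets_windows:
  "e \<in> H n r C \<longleftrightarrow> e \<in> r_subsets n r \<and> (\<forall>i < length C. e \<inter> window n C i \<noteq> {})"
  unfolding H_def r_subsets_def window_def by simp

text \<open>The window [w_p, w_(p-1)] contains w_p, w_(p+2), ..., w_(p+2m) = w_(p-1): in
  odd_even_order these are m + 1 cyclically consecutive entries.\<close>
lemma semi_valid_window_mem:
  assumes sv: "semi_valid n C" and len: "length C = 2 * m + 1" and "i < 2 * m + 1" "t \<le> m"
  shows "C ! ((i + 2 * t) mod (2 * m + 1)) \<in> window n C i"
proof -
  define K where "K = 2 * m + 1"
  define L where "L = odd_even_order C"
  obtain k where sorted: "sorted_wrt (<) (rotate k L)" and L: "set L \<subseteq> {..<n}"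
    using sv unfolding semi_valid_def cyc_ordered_def L_def by auto
  have lenL: "length L = K"
    unfolding L_def K_def using length_odd_even_order[OF len] .
  define a where "a = odd_even_pos m i"
  define b where "b = (a + (K - k mod K)) mod K"
  have "a < K" "b < K" "k mod K < K"
    unfolding a_def b_def K_def using odd_even_pos_less by auto
  have rot: "rotate k L ! ((b + j) mod K) = L ! ((a + j) mod K)" for j
  proof -
    have "(k + (b + j) mod K) mod K = (k mod K + (a + (K - k mod K)) + j) mod K"
      unfolding b_def by (simp add: mod_add_left_eq mod_add_right_eq add.assoc)
    also have "k mod K + (a + (K - k mod K)) + j = (a + j) + K"
      using \<open>k mod K < K\<close> by linarith
    finally have "(k + (b + j) mod K) mod K = (a + j) mod K"
      by simp
    then show ?thesis
      using nth_rotate[of "(b + j) mod K" L k] lenL \<open>b < K\<close> by simp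
  qed
  have C_L: "C ! ((i + 2 * j) mod K) = L ! ((a + j) mod K)" for j
    using nth_odd_even_order[OF len, of "(i + 2 * j) mod K"] odd_even_pos_add_double[of m i j]
    unfolding L_def a_def K_def by simp
  have "(i + length C - 1) mod length C = (i + 2 * m) mod K"
    using len K_def by simp
  moreover have "C ! i = L ! a"
    using C_L[of 0] \<open>a < K\<close> \<open>i < 2 * m + 1\<close> K_def by simp
  moreover have "rotate k L ! ((b + t) mod K)
      \<in> cyc_closed n (rotate k L ! b) (rotate k L ! ((b + m) mod K))"
    using sorted L lenL \<open>b < K\<close> \<open>t \<le> m\<close> K_def by (intro sorted_cyclic_window) auto
  ultimately show ?thesis
    unfolding window_def
    using rot[of t] rot[of 0] rot[of m] C_L[of t] C_L[of m] \<open>a < K\<close> \<open>b < K\<close> K_def by simp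
qed

lemma semi_valid_window_card:
  assumes sv: "semi_valid n C" and len: "length C = 2 * m + 1" and "i < 2 * m + 1"
  shows "m + 1 \<le> card (set C \<inter> window n C i)"
proof -
  let ?f = "\<lambda>t. C ! ((i + 2 * t) mod (2 * m + 1))"
  have "inj_on ?f {0..m}"
  proof (rule linorder_inj_onI)
    fix t t' assume "t < t'" "t \<in> {0..m}" "t' \<in> {0..m}"
    then have "(i + 2 * t) mod (2 * m + 1) \<noteq> (i + 2 * t') mod (2 * m + 1)"
      by (intro mod_add_neq) auto
    then show "?f t \<noteq> ?f t'"
      using sv len unfolding semi_valid_def by (simp add: nth_eq_iff_index_eq)
  qed auto
  moreover have "?f ` {0..m} \<subseteq> set C \<inter> window n C i"
    using semi_valid_window_mem[OF sv len \<open>i < 2 * m + 1\<close>] len by auto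
  ultimately show ?thesis
    using card_mono[of _ "?f ` {0..m}"] by (fastforce simp: card_image)
qed

section \<open>An upper bound on the number of non-edges\<close>

lemma non_edges_subset_gaps:
  assumes sv: "semi_valid n C" and len: "length C = 2 * m + 1" and "1 \<le> r"
  shows "r_subsets n r - H n r C
    \<subseteq> (\<Union>p\<in>Sigma {1..n-1} (rich_starts n (set C) (m + 1)). sets_with_gap n r (snd p) (fst p))"
proof
  fix e assume e: "e \<in> r_subsets n r - H n r C"
  then have "e \<subseteq> {..<n}" "e \<noteq> {}"
    using assms(3) unfolding r_subsets_def by auto
  obtain i where i: "i < length C"
    and avoid: "e \<inter> cyc_closed n (C ! i) (C ! ((i + length C - 1) mod length C)) = {}"
    using e by (auto simp: H_iff_meets_windows window_def)
  let ?u = "C ! i" and ?w = "C ! ((i + length C - 1) mod length C)"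
  have "set C \<subseteq> {..<n}"
    using sv unfolding semi_valid_def by simp
  moreover have "(i + length C - 1) mod length C < length C"
    using i by (intro mod_less_divisor) linarith
  ultimately have "?u < n" "?w < n"
    using i nth_mem by blast+
  let ?z = "(?u + n - 1) mod n" and ?L = "(?w + n - ?u) mod n + 1"
  have window: "cyc_closed n ?u ?w = arc n ?z ?L"
    using cyc_closed_eq_arc \<open>?u < n\<close> \<open>?w < n\<close> by simp
  have "?z < n" "1 \<le> ?L"
    using \<open>?u < n\<close> by auto
  obtain x s where x: "x \<in> e" "1 \<le> s" "s < n" "(x + s + 1) mod n \<in> e" "e \<inter> arc n x s = {}"
      and "arc n ?z ?L \<subseteq> arc n x s"
    using gap_covering_arc[OF \<open>?z < n\<close> \<open>e \<subseteq> {..<n}\<close> \<open>e \<noteq> {}\<close> avoid[unfolded window]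
        \<open>1 \<le> ?L\<close>] .
  then have covers: "cyc_closed n ?u ?w \<subseteq> arc n x s"
    using window by simp
  have "m + 1 \<le> card (set C \<inter> cyc_closed n ?u ?w)"
    using semi_valid_window_card[OF sv len] i len unfolding window_def by simp
  also have "\<dots> \<le> card (set C \<inter> arc n x s)"
    using covers by (intro card_mono) auto
  finally have "x \<in> rich_starts n (set C) (m + 1) s"
    using x(1) \<open>e \<subseteq> {..<n}\<close> unfolding rich_starts_def by auto
  moreover have "e \<in> sets_with_gap n r x s"
    using e x unfolding sets_with_gap_def by auto
  ultimately show "e \<in> (\<Union>p\<in>Sigma {1..n-1} (rich_starts n (set C) (m + 1)). sets_with_gap n r (snd p) (fst p))"
    using x(2,3) by (auto intro!: bexI[of _ "(s, x)"])
qed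

lemma card_non_edges_le:
  assumes sv: "semi_valid n C" and len: "length C = 2 * m + 1" and "3 \<le> r"
  shows "card (r_subsets n r - H n r C)
    \<le> (\<Sum>s=1..n-1. ((n - s - 2) choose (r - 2)) * card (rich_starts n (set C) (m + 1) s))"
proof -
  let ?I = "Sigma {1..n-1} (rich_starts n (set C) (m + 1))"
  have "card (r_subsets n r - H n r C) \<le> card (\<Union>p\<in>?I. sets_with_gap n r (snd p) (fst p))"
    using non_edges_subset_gaps[OF sv len] assms(3)
    by (intro card_mono) (auto simp: sets_with_gap_def intro: finite_subset[OF _ finite_r_subsets])
  also have "\<dots> \<le> (\<Sum>p\<in>?I. card (sets_with_gap n r (snd p) (fst p)))"
    by (rule card_UN_le) auto
  also have "\<dots> = (\<Sum>s=1..n-1. ((n - s - 2) choose (r - 2)) * card (rich_starts n (set C) (m + 1) s))"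
    using sum_card_sets_with_gap[OF assms(3)] rich_starts_subset by simp
  finally show ?thesis .
qed

section \<open>The standard tuple and a lower bound\<close>

lemma odd_even_pos_double: "(2 * odd_even_pos m c) mod (2 * m + 1) = c mod (2 * m + 1)"
proof -
  have "2 * (c * (m + 1)) = c + c * (2 * m + 1)"
    by (simp add: algebra_simps)
  then have "(2 * odd_even_pos m c) mod (2 * m + 1) = (c + c * (2 * m + 1)) mod (2 * m + 1)"
    unfolding odd_even_pos_def mod_mult_right_eq by (simp only:)
  then show ?thesis
    by (simp only: mod_mult_self1)
qed

lemma inj_on_odd_even_pos: "inj_on (odd_even_pos m) {..<2 * m + 1}"
  by (rule inj_onI) (metis lessThan_iff mod_less odd_even_pos_double)

text \<open>The tuple (0, m + 1, 1, m + 2, ..., 2m, m), whose odd-even order is 0, 1, ..., 2m.\<close>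
definition standard_tuple :: "nat \<Rightarrow> nat list" where
  "standard_tuple m = map (odd_even_pos m) [0..<2 * m + 1]"

lemma length_standard_tuple [simp]: "length (standard_tuple m) = 2 * m + 1"
  unfolding standard_tuple_def by simp

lemma nth_standard_tuple: "i < 2 * m + 1 \<Longrightarrow> standard_tuple m ! i = odd_even_pos m i"
  unfolding standard_tuple_def by (simp del: upt_Suc)

lemma distinct_standard_tuple: "distinct (standard_tuple m)"
  unfolding standard_tuple_def using inj_on_odd_even_pos[of m]
  by (simp add: distinct_map atLeast0LessThan del: upt_Suc)

lemma card_set_standard_tuple: "card (set (standard_tuple m)) = 2 * m + 1"
  using distinct_card[OF distinct_standard_tuple] by simp

lemma set_standard_tuple_subset: "set (standard_tuple m) \<subseteq> {..<2 * m + 1}"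
  unfolding standard_tuple_def using odd_even_pos_less by (auto simp del: upt_Suc)

lemma odd_even_order_standard_tuple: "odd_even_order (standard_tuple m) = [0..<2 * m + 1]"
proof (rule nth_equalityI)
  show "length (odd_even_order (standard_tuple m)) = length [0..<2 * m + 1]"
    using length_odd_even_order[OF length_standard_tuple] by simp
next
  fix j assume "j < length (odd_even_order (standard_tuple m))"
  then have j: "j < 2 * m + 1"
    using length_odd_even_order[OF length_standard_tuple] by simp
  show "odd_even_order (standard_tuple m) ! j = [0..<2 * m + 1] ! j"
  proof (cases "j \<le> m")
    case True
    then have "odd_even_order (standard_tuple m) ! j = odd_even_pos m (2 * j)"
      unfolding odd_even_order_def by (simp add: nth_append nth_standard_tuple del: upt_Suc)
    then show ?thesis
      using True j odd_even_pos_even by (simp del: upt_Suc)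
  next
    case False
    then have "j - m - 1 < m"
      using j by simp
    then have "odd_even_order (standard_tuple m) ! j = odd_even_pos m (2 * (j - m - 1) + 1)"
      unfolding odd_even_order_def using False j by (simp add: nth_append nth_standard_tuple del: upt_Suc)
    then show ?thesis
      using False j odd_even_pos_odd[of "j - m - 1" m] by (simp del: upt_Suc)
  qed
qed

lemma semi_valid_standard_tuple: "2 * m + 1 \<le> n \<Longrightarrow> semi_valid n (standard_tuple m)"
  unfolding semi_valid_def cyc_ordered_def odd_even_order_standard_tuple
  using distinct_standard_tuple[of m] set_standard_tuple_subset[of m]
  by (auto simp del: upt_Suc intro!: exI[where x = 0])

lemma window_standard_tuple_low:
  assumes "x < m" "2 * m + 2 \<le> n"
  shows "window n (standard_tuple m) (2 * x + 2) = arc n x (m + 1)"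
proof -
  have "(2 * x + 2 + (2 * m + 1) - 1) mod (2 * m + 1) = 2 * x + 1"
    using assms(1) by (simp add: le_mod_geq)
  moreover have "standard_tuple m ! (2 * x + 2) = x + 1" "standard_tuple m ! (2 * x + 1) = m + 1 + x"
    using assms(1) odd_even_pos_even[of "x + 1" m] odd_even_pos_odd[of x m]
    by (simp_all add: nth_standard_tuple)
  moreover have "cyc_closed n (x + 1) (m + 1 + x) = arc n (x + n) (m + 1)"
    using assms cyc_closed_eq_arc[of "x + 1" n "m + 1 + x"] by simp
  ultimately show ?thesis
    unfolding window_def by (simp add: arc_add_self)
qed

lemma window_standard_tuple_zero:
  assumes "2 * m + 2 \<le> n"
  shows "window n (standard_tuple m) 0 = arc n (n - 1) (m + 1)"
proof -
  have "standard_tuple m ! 0 = 0" "standard_tuple m ! (2 * m) = m"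
    using odd_even_pos_even[of 0 m] odd_even_pos_even[of m m] by (simp_all add: nth_standard_tuple)
  then show ?thesis
    unfolding window_def using assms cyc_closed_eq_arc[of 0 n m] by simp
qed

lemma window_standard_tuple_high:
  assumes "m \<le> x" "x < 2 * m" "2 * m + 2 \<le> n"
  shows "window n (standard_tuple m) (2 * (x - m) + 1) = arc n x (n - m)"
proof -
  have "(2 * (x - m) + 1 + (2 * m + 1) - 1) mod (2 * m + 1) = 2 * (x - m)"
    using assms(1,2) by (simp add: le_mod_geq)
  moreover have "standard_tuple m ! (2 * (x - m) + 1) = x + 1"
      "standard_tuple m ! (2 * (x - m)) = x - m"
    using assms odd_even_pos_odd[of "x - m" m] odd_even_pos_even[of "x - m" m]
    by (simp_all add: nth_standard_tuple)
  moreover have "cyc_closed n (x + 1) (x - m) = arc n (x + n) (n - m)"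
  proof -
    have "(x - m + n - (x + 1)) mod n + 1 = n - m" "x + 1 + n - 1 = x + n"
      using assms by simp_all
    then show ?thesis
      using assms cyc_closed_eq_arc[of "x + 1" n "x - m"] by simp
  qed
  ultimately show ?thesis
    unfolding window_def by (simp add: arc_add_self)
qed

text \<open>Starts x whose arc of length s contains one of the windows computed above.\<close>
definition good_starts :: "nat \<Rightarrow> nat \<Rightarrow> nat \<Rightarrow> nat set" where
  "good_starts n m s =
    (if s \<le> m then {} else if s < n - m then {..<m} \<union> {n + m - s..<n} else {..<n})"

definition good_count :: "nat \<Rightarrow> nat \<Rightarrow> nat \<Rightarrow> nat" where
  "good_count n m s = (if s \<le> m then 0 else if s < n - m then s else n)"

lemma good_starts_subset: "good_starts n m s \<subseteq> {..<n}"
  unfolding good_starts_def by auto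

lemma finite_good_starts [simp]: "finite (good_starts n m s)"
  unfolding good_starts_def by simp

lemma card_good_starts:
  assumes "s \<le> n"
  shows "card (good_starts n m s) = good_count n m s"
proof -
  have "card ({..<m} \<union> {n + m - s..<n}) = s" if "m < s"
    using assms that by (subst card_Un_disjoint) auto
  then show ?thesis
    unfolding good_starts_def good_count_def by simp
qed

lemma good_count_complement:
  "2 * m + 2 \<le> n \<Longrightarrow> 1 \<le> s \<Longrightarrow> s < n \<Longrightarrow> good_count n m s + good_count n m (n - s) = n"
  unfolding good_count_def by auto

lemma good_start_covers_window:
  assumes "2 * m + 2 \<le> n" "s \<le> n" "x \<in> good_starts n m s"
  obtains i where "i < 2 * m + 1" "window n (standard_tuple m) i \<subseteq> arc n x s"
proof -
  note cover = that
  have "x < n" "m < s"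
    using assms(3) unfolding good_starts_def by (auto split: if_splits)
  have low: thesis if "x < m" "m + 1 \<le> s"
    using that assms(1) window_standard_tuple_low arc_subset_arc[of 0 "m + 1" s n x]
    by (intro cover[of "2 * x + 2"]) auto
  have zero: thesis if "n + m \<le> x + s"
    using that \<open>x < n\<close> assms(1) window_standard_tuple_zero
      arc_subset_arc[of "n - 1 - x" "m + 1" s n x]
    by (intro cover[of 0]) auto
  have high: thesis if "m \<le> x" "x < 2 * m" "n - m \<le> s"
    using that assms(1) window_standard_tuple_high arc_subset_arc[of 0 "n - m" s n x]
    by (intro cover[of "2 * (x - m) + 1"]) auto
  show thesis
  proof (cases "s < n - m")
    case True
    then show thesis
      using assms(2,3) \<open>m < s\<close> low zero unfolding good_starts_def by (auto split: if_splits)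
  next
    case False
    then show thesis
      using assms(1) \<open>x < n\<close> \<open>m < s\<close> low zero high by (cases "x < m"; cases "x < 2 * m") auto
  qed
qed

lemma rich_gap_families_disjoint:
  assumes "x \<in> rich_starts n P q s" "x' \<in> rich_starts n P q s'" "finite P" "card P < 2 * q"
    and "(x, s) \<noteq> (x', s')"
  shows "sets_with_gap n r x s \<inter> sets_with_gap n r x' s' = {}"
  using sets_with_gap_arcs_disjoint[OF _ _ assms(5)] rich_arcs_meet[OF assms(1-4)] by blast

lemma card_non_edges_standard_ge:
  assumes "2 * m + 2 \<le> n" "3 \<le> r"
  shows "(\<Sum>s=1..n-1. ((n - s - 2) choose (r - 2)) * good_count n m s)
    \<le> card (r_subsets n r - H n r (standard_tuple m))"
proof -
  let ?st = "standard_tuple m"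
  let ?I = "Sigma {1..n-1} (good_starts n m)"
  let ?gaps = "\<lambda>p. sets_with_gap n r (snd p) (fst p)"
  have covers: "\<exists>i < 2 * m + 1. window n ?st i \<subseteq> arc n x s" if "(s, x) \<in> ?I" for s x
  proof -
    have "s \<le> n" "x \<in> good_starts n m s"
      using that by auto
    then show ?thesis
      using good_start_covers_window[OF assms(1)] by metis
  qed
  have rich: "x \<in> rich_starts n (set ?st) (m + 1) s" if sx: "(s, x) \<in> ?I" for s x
  proof -
    obtain i where "i < 2 * m + 1" "window n ?st i \<subseteq> arc n x s"
      using covers[OF sx] by blast
    then have "m + 1 \<le> card (set ?st \<inter> window n ?st i)"
      using semi_valid_window_card semi_valid_standard_tuple assms(1) by simp
    also have "\<dots> \<le> card (set ?st \<inter> arc n x s)"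
      using \<open>window n ?st i \<subseteq> arc n x s\<close> by (intro card_mono) auto
    finally show ?thesis
      using sx good_starts_subset unfolding rich_starts_def by auto
  qed
  have gaps_non_edges: "(\<Union>p\<in>?I. ?gaps p) \<subseteq> r_subsets n r - H n r ?st"
  proof
    fix e assume "e \<in> (\<Union>p\<in>?I. ?gaps p)"
    then obtain s x where "(s, x) \<in> ?I" "e \<in> sets_with_gap n r x s"
      by auto
    moreover obtain i where "i < 2 * m + 1" "window n ?st i \<subseteq> arc n x s"
      using covers calculation(1) by blast
    ultimately show "e \<in> r_subsets n r - H n r ?st"
      unfolding sets_with_gap_def by (auto simp: H_iff_meets_windows)
  qed
  have "(\<Sum>s=1..n-1. ((n - s - 2) choose (r - 2)) * good_count n m s)
      = (\<Sum>s=1..n-1. ((n - s - 2) choose (r - 2)) * card (good_starts n m s))"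
    by (rule sum.cong) (auto simp: card_good_starts)
  also have "\<dots> = (\<Sum>p\<in>?I. card (?gaps p))"
    using sum_card_sets_with_gap[OF assms(2), of "good_starts n m"] good_starts_subset by simp
  also have "\<dots> = card (\<Union>p\<in>?I. ?gaps p)"
  proof (rule card_UN_disjoint[symmetric])
    show "finite ?I"
      by (intro finite_SigmaI) simp_all
    show "\<forall>p\<in>?I. finite (?gaps p)"
      unfolding sets_with_gap_def by (auto intro: finite_subset[OF _ finite_r_subsets])
    show "\<forall>p\<in>?I. \<forall>p'\<in>?I. p \<noteq> p' \<longrightarrow> ?gaps p \<inter> ?gaps p' = {}"
    proof (intro ballI impI)
      fix p p' assume "p \<in> ?I" "p' \<in> ?I" "p \<noteq> p'"
      then show "?gaps p \<inter> ?gaps p' = {}"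
        using rich[of "fst p" "snd p"] rich[of "fst p'" "snd p'"] card_set_standard_tuple[of m]
        by (intro rich_gap_families_disjoint[of _ n "set ?st" "m + 1"]) (auto simp: prod_eq_iff)
    qed
  qed
  also have "\<dots> \<le> card (r_subsets n r - H n r ?st)"
    using gaps_non_edges by (intro card_mono) auto
  finally show ?thesis .
qed

section \<open>A weighted sum inequality\<close>

lemma sum_antisymmetric_reflect:
  fixes W D :: "nat \<Rightarrow> int"
  assumes "\<And>s. 1 \<le> s \<Longrightarrow> s \<le> n - 1 \<Longrightarrow> D (n - s) = - D s"
  shows "2 * (\<Sum>s=1..n-1. W s * D s) = (\<Sum>s=1..n-1. (W s - W (n - s)) * D s)"
proof -
  have "(\<Sum>s=1..n-1. W s * D s) = (\<Sum>s=1..n-1. W (n - s) * D (n - s))"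
    by (rule sum.reindex_bij_witness[where i = "\<lambda>s. n - s" and j = "\<lambda>s. n - s"]) auto
  also have "\<dots> = - (\<Sum>s=1..n-1. W (n - s) * D s)"
    using assms by (simp add: sum_negf[symmetric])
  finally show ?thesis
    by (simp add: left_diff_distrib sum_subtractf)
qed

text \<open>Pairing s with n - s, the weighted sums differ by terms (w s - w (n - s)) (F s - G s),
  which are all non-positive and negative at p.\<close>
lemma weighted_sum_less_of_complementary:
  fixes F G w :: "nat \<Rightarrow> nat" and n p :: nat
  assumes symF: "\<And>s. 1 \<le> s \<Longrightarrow> s \<le> n - 1 \<Longrightarrow> F s + F (n - s) = n"
    and symG: "\<And>s. 1 \<le> s \<Longrightarrow> s \<le> n - 1 \<Longrightarrow> G s + G (n - s) = n"
    and le: "\<And>s. 1 \<le> s \<Longrightarrow> 2 * s < n \<Longrightarrow> F s \<le> G s"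
    and antimono: "\<And>s t. 1 \<le> s \<Longrightarrow> s \<le> t \<Longrightarrow> t \<le> n - 1 \<Longrightarrow> w t \<le> w s"
    and p: "1 \<le> p" "2 * p < n" "F p < G p" "w (n - p) < w p"
  shows "(\<Sum>s=1..n-1. w s * F s) < (\<Sum>s=1..n-1. w s * G s)"
proof -
  define D where "D s = int (F s) - int (G s)" for s
  define T where "T s = (int (w s) - int (w (n - s))) * D s" for s
  have D_reflect: "D (n - s) = - D s" if "1 \<le> s" "s \<le> n - 1" for s
    using symF[OF that] symG[OF that] unfolding D_def by simp
  have T_nonpos: "T s \<le> 0" if "s \<in> {1..n-1}" for s
  proof -
    consider "2 * s < n" | "2 * s = n" | "n < 2 * s"
      by linarith
    then show ?thesis
    proof cases
      case 1
      then have "w (n - s) \<le> w s" "F s \<le> G s"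
        using le[of s] antimono[of s "n - s"] that by auto
      then show ?thesis
        unfolding T_def D_def by (intro mult_nonneg_nonpos) auto
    next
      case 2
      then have "n - s = s"
        by simp
      then show ?thesis
        unfolding T_def by simp
    next
      case 3
      then have "F (n - s) \<le> G (n - s)"
        using le[of "n - s"] that by auto
      then have "D s \<ge> 0"
        using D_reflect[of s] that unfolding D_def by auto
      then show ?thesis
        using antimono[of "n - s" s] that 3 unfolding T_def by (simp add: mult_nonpos_nonneg)
    qed
  qed
  have "T p < 0"
    using p unfolding T_def D_def by (simp add: mult_pos_neg)
  moreover have "p \<in> {1..n-1}"
    using p by auto
  moreover have "(\<Sum>s\<in>{1..n-1} - {p}. T s) \<le> 0"
    using T_nonpos by (intro sum_nonpos) simp
  ultimately have "(\<Sum>s=1..n-1. T s) < 0"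
    by (simp add: sum.remove)
  then have "(\<Sum>s=1..n-1. int (w s) * D s) < 0"
    using sum_antisymmetric_reflect[of n D "\<lambda>s. int (w s)"] D_reflect unfolding T_def by simp
  then show ?thesis
    unfolding D_def by (simp add: right_diff_distrib sum_subtractf flip: of_nat_mult of_nat_sum)
qed

lemma binomial_strict_mono:
  assumes "a < b" "1 \<le> k" "k \<le> b"
  shows "a choose k < b choose k"
proof -
  obtain b' k' where "b = Suc b'" "k = Suc k'"
    using assms(1,2) by (cases b; cases k) auto
  then have "b choose k = (b' choose k') + (b' choose k)" "0 < b' choose k'"
    using assms(3) by simp_all
  moreover have "a choose k \<le> b' choose k"
    using assms(1) \<open>b = Suc b'\<close> by (intro binomial_right_mono) simp
  ultimately show ?thesis
    by linarith
qed

lemma card_non_edges_less: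
  fixes l r n :: nat
  assumes "l \<ge> 1" "r \<ge> 3" "n \<ge> 3 * r - 5" "n \<ge> 2 * l + 3"
    and sv: "semi_valid n C" and len: "length C = 2 * l + 3"
  shows "card (r_subsets n r - H n r C) < card (r_subsets n r - H n r (standard_tuple l))"
proof -
  define w where "w s = (n - s - 2) choose (r - 2)" for s
  define F where "F s = card (rich_starts n (set C) (l + 2) s)" for s
  have "set C \<subseteq> {..<n}" "card (set C) = 2 * l + 3"
    using sv len unfolding semi_valid_def by (auto simp: distinct_card)
  have "card (r_subsets n r - H n r C) \<le> (\<Sum>s=1..n-1. w s * F s)"
    using card_non_edges_le[OF sv, of "l + 1"] len assms(2) unfolding w_def F_def by simp
  also have "\<dots> < (\<Sum>s=1..n-1. w s * good_count n l s)"
  proof (rule weighted_sum_less_of_complementary[where p = "l + 1"])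
    fix s assume "1 \<le> s" "s \<le> n - 1"
    then show "F s + F (n - s) = n"
      unfolding F_def using \<open>set C \<subseteq> {..<n}\<close> \<open>card (set C) = 2 * l + 3\<close>
      by (intro card_rich_starts_complement) auto
    show "good_count n l s + good_count n l (n - s) = n"
      using \<open>1 \<le> s\<close> \<open>s \<le> n - 1\<close> assms(4) by (intro good_count_complement) auto
  next
    fix s assume "1 \<le> s" "2 * s < n"
    show "F s \<le> good_count n l s"
    proof (cases "s \<le> l")
      case True
      then show ?thesis
        unfolding F_def using \<open>2 * s < n\<close> rich_starts_empty_if_short by simp
    next
      case False
      then have "good_count n l s = s"
        unfolding good_count_def using \<open>2 * s < n\<close> by simp
      moreover have "F s \<le> s"
        unfolding F_def using \<open>1 \<le> s\<close> \<open>2 * s < n\<close> \<open>card (set C) = 2 * l + 3\<close>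
        by (intro card_rich_starts_le) auto
      ultimately show ?thesis
        by simp
    qed
  next
    fix s t assume "1 \<le> s" "s \<le> t" "t \<le> n - 1"
    then show "w t \<le> w s"
      unfolding w_def by (intro binomial_right_mono) simp
  next
    have "F (l + 1) = 0"
      unfolding F_def using assms(4) rich_starts_empty_if_short by simp
    then show "F (l + 1) < good_count n l (l + 1)"
      unfolding good_count_def using assms(4) by simp
    have "w (n - (l + 1)) = (l - 1) choose (r - 2)" "w (l + 1) = (n - l - 3) choose (r - 2)"
      unfolding w_def using assms(4) by (simp_all add: numeral_3_eq_3)
    moreover have "(l - 1) choose (r - 2) < (n - l - 3) choose (r - 2)"
      using assms by (intro binomial_strict_mono) auto
    ultimately show "w (n - (l + 1)) < w (l + 1)"
      by simp
  qed (use assms(4) in auto)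
  also have "\<dots> \<le> card (r_subsets n r - H n r (standard_tuple l))"
    using card_non_edges_standard_ge[of l n r] assms(2,4) unfolding w_def by simp
  finally show ?thesis .
qed

lemma card_H_standard_tuple_less:
  fixes l r n :: nat
  assumes "l \<ge> 1" "r \<ge> 3" "n \<ge> 3 * r - 5" "n \<ge> 2 * l + 3"
    and "semi_valid n C" "length C = 2 * l + 3"
  shows "card (H n r (standard_tuple l)) < card (H n r C)"
proof -
  have le: "card (H n r C') \<le> card (r_subsets n r)" for C'
    by (rule card_mono[OF finite_r_subsets H_subset_r_subsets])
  have "card (r_subsets n r - H n r C') = card (r_subsets n r) - card (H n r C')" for C'
    using H_subset_r_subsets[of n r C'] by (simp add: card_Diff_subset finite_subset)
  then have "card (r_subsets n r) - card (H n r C)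
      < card (r_subsets n r) - card (H n r (standard_tuple l))"
    using card_non_edges_less[OF assms] by simp
  then show ?thesis
    using le[of C] le[of "standard_tuple l"] by linarith
qed

theorem proposition3p10:
  fixes l r n :: nat
  assumes "l \<ge> 1" and "r \<ge> 3" and "n \<ge> 3 * r - 5" and "n \<ge> 2 * l + 3"
  shows "Min {card (H n r C) | C. semi_valid n C \<and> length C = 2 * l + 1}
       < Min {card (H n r C') | C'. semi_valid n C' \<and> length C' = 2 * l + 3}"
proof -
  let ?A = "{card (H n r C) | C. semi_valid n C \<and> length C = 2 * l + 1}"
  let ?B = "{card (H n r C') | C'. semi_valid n C' \<and> length C' = 2 * l + 3}"
  have "card (H n r C) \<le> n choose r" for C
    using card_mono[OF finite_r_subsets H_subset_r_subsets] card_r_subsets by simp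
  then have "?A \<subseteq> {..n choose r}" "?B \<subseteq> {..n choose r}"
    by auto
  then have "finite ?A" "finite ?B"
    by (auto intro: finite_subset)
  have "card (H n r (standard_tuple l)) \<in> ?A"
    using semi_valid_standard_tuple[of l n] assms(4) by auto
  have "card (H n r (standard_tuple (l + 1))) \<in> ?B"
    using semi_valid_standard_tuple[of "l + 1" n] assms(4) by auto
  then have "Min ?B \<in> ?B"
    using Min_in[OF \<open>finite ?B\<close>] by blast
  then obtain C' where C': "Min ?B = card (H n r C')" "semi_valid n C'" "length C' = 2 * l + 3"
    by blast
  have "Min ?A \<le> card (H n r (standard_tuple l))"
    by (rule Min_le[OF \<open>finite ?A\<close> \<open>card (H n r (standard_tuple l)) \<in> ?A\<close>])
  also have "\<dots> < card (H n r C')"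
    by (rule card_H_standard_tuple_less[OF assms C'(2,3)])
  finally show ?thesis
    using C'(1) by simp
qed

end
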